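(* Let $1\le p<\infty$, let $f\in\mathcal U_p(\mathbb{R}^2)$, and set $\varphi_1(y)=\|f_y\|^*_{\operatorname{Lip}\frac1p}$ and $\varphi_2(x)=\|f_x\|^*_{\operatorname{Lip}\frac1p}$. Then $f\in S_0(\mathbb{R}^2)$, and there is a constant $c>0$ depending only on $p$ such that for every $t>0$, $$f^*(t)-f^*(2t)\le c\,t^{1/(2p)}\left(\varphi_1^*\!\left(\tfrac{\sqrt t}{2}\right)+\varphi_2^*\!\left(\tfrac{\sqrt t}{2}\right)\right).$$
   Context: For a function $f$ on $\mathbb{R}^2$, $f_x(y)=f(x,y)$ and $f_y(x)=f(x,y)$ denote the sections. For $\varphi$ on $\mathbb{R}$, $\Delta_h\varphi(t)=\varphi(t+h)-\varphi(t)$; for $\alpha\in(0,1]$, $\|\varphi\|^*_{\operatorname{Lip}\alpha}=\sup_{h>0}h^{-\alpha}\|\Delta_h\varphi\|_\infty$ ($\|\cdot\|_\infty$ the essential supremum), $\operatorname{Lip}\alpha$ is the class of $\varphi\in L^\infty(\mathbb{R})$ with this quantity finite, and $\|\varphi\|_{\operatorname{Lip}\alpha}=\|\varphi\|_\infty+\|\varphi\|^*_{\operatorname{Lip}\alpha}$. $S_0(\mathbb{R}^n)$ is the class of measurable a.e. finite $g$ on $\mathbb{R}^n$ with $|\{|g|>s\}|<\infty$ for all $s>0$; $g^*$ is the non-increasing rearrangement of $g$ on $(0,\infty)$ (non-negative, non-increasing, equimeasurable with $|g|$). $L^{p,1}(\mathbb{R})$ is the set of $g\in S_0(\mathbb{R})$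 with $\int_0^\infty t^{1/p-1}g^*(t)\,dt<\infty$. $\mathcal U_p(\mathbb{R}^2)$ is the set of measurable $f$ on $\mathbb{R}^2$ such that almost every $x$-section and $y$-section lies in $\operatorname{Lip}\frac1p$ and $y\mapsto\|f_y\|_{\operatorname{Lip}\frac1p}$, $x\mapsto\|f_x\|_{\operatorname{Lip}\frac1p}$ belong to $L^{p,1}(\mathbb{R})$. *)

theory Defs
  imports "HOL-Analysis.Analysis" "HOL-Probability.Essential_Supremum"
begin

definition ess_norm :: "(real \<Rightarrow> real) \<Rightarrow> ereal" where
  "ess_norm g = esssup lebesgue (\<lambda>t. ereal \<bar>g t\<bar>)"

definition lip_semi :: "real \<Rightarrow> (real \<Rightarrow> real) \<Rightarrow> ereal" where
  "lip_semi \<alpha> \<phi> = (SUP h\<in>{0<..}. ereal (h powr (-\<alpha>)) * ess_norm (\<lambda>t. \<phi> (t + h) - \<phi> t))"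

definition Lip_class :: "real \<Rightarrow> (real \<Rightarrow> real) \<Rightarrow> bool" where
  "Lip_class \<alpha> \<phi> \<longleftrightarrow> \<phi> \<in> borel_measurable lebesgue \<and> ess_norm \<phi> < \<infinity> \<and> lip_semi \<alpha> \<phi> < \<infinity>"

definition lip_norm :: "real \<Rightarrow> (real \<Rightarrow> real) \<Rightarrow> real" where
  "lip_norm \<alpha> \<phi> = real_of_ereal (ess_norm \<phi>) + real_of_ereal (lip_semi \<alpha> \<phi>)"

text \<open>The class S_0 on R^n (here for any Euclidean space, used with real and real*real).
  Functions are real-valued, hence finite everywhere.\<close>
definition S0 :: "('a::euclidean_space \<Rightarrow> real) \<Rightarrow> bool" where
  "S0 g \<longleftrightarrow> g \<in> borel_measurable lebesgue \<and>
     (\<forall>s>0. emeasure lebesgue {x. s < \<bar>g x\<bar>} < \<infinity>)"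

definition rearr :: "('a::euclidean_space \<Rightarrow> real) \<Rightarrow> real \<Rightarrow> real" where
  "rearr g t = Inf {s::real. 0 \<le> s \<and> emeasure lebesgue {x. s < \<bar>g x\<bar>} \<le> ennreal t}"

definition Lorentz_p1 :: "real \<Rightarrow> (real \<Rightarrow> real) \<Rightarrow> bool" where
  "Lorentz_p1 p g \<longleftrightarrow> S0 g \<and>
     (\<integral>\<^sup>+ t. indicator {0<..} t * ennreal (t powr (1/p - 1) * rearr g t) \<partial>lborel) < \<infinity>"

text \<open>The class U_p(R^2). Sections: f_x(y) = f(x,y), f_y(x) = f(x,y).\<close>
definition U_p :: "real \<Rightarrow> (real \<times> real \<Rightarrow> real) \<Rightarrow> bool" where
  "U_p p f \<longleftrightarrow> f \<in> borel_measurable lebesgue \<and>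
     (AE x in lebesgue. Lip_class (1/p) (\<lambda>y. f (x, y))) \<and>
     (AE y in lebesgue. Lip_class (1/p) (\<lambda>x. f (x, y))) \<and>
     Lorentz_p1 p (\<lambda>y. lip_norm (1/p) (\<lambda>x. f (x, y))) \<and>
     Lorentz_p1 p (\<lambda>x. lip_norm (1/p) (\<lambda>y. f (x, y)))"

end

theory Submission
  imports Defs
begin

text \<open>Write \<open>\<lambda> = f\<^sup>*(2t)\<close>, \<open>s = \<surd>t/2\<close>, \<open>h = 8\<surd>t\<close>, \<open>a = \<phi>\<^sub>1\<^sup>*(s)\<close>, \<open>b = \<phi>\<^sub>2\<^sup>*(s)\<close> and
  \<open>\<mu> = \<lambda> + 8 t\<^bsup>1/(2p)\<^esup> (a + b)\<close>. If the section \<open>f\<^sub>y\<close> has seminorm at most \<open>a\<close>, its increments over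
  lengths \<open>\<le> h\<close> are at most \<open>a h\<^bsup>1/p\<^esup> \<le> \<mu> - \<lambda>\<close>, so if \<open>|f\<^sub>y| > \<mu>\<close> on a non-null set then
  \<open>|f\<^sub>y| > \<lambda>\<close> on an interval of length \<open>h\<close>. Since \<open>|{|f| > \<lambda>}| \<le> 2t\<close>, Fubini and Chebyshev show that
  this happens only for \<open>y\<close> in a set of measure \<open>\<le> 2t/h = \<surd>t/4\<close>, while \<open>\<phi>\<^sub>1 > a\<close> only on a set of
  measure \<open>\<le> s\<close>. Arguing likewise in the other variable, \<open>{|f| > \<mu>}\<close> lies, up to a null set, in a
  rectangle of area \<open>(3\<surd>t/4)\<^sup>2 < t\<close>, whence \<open>f\<^sup>*(t) \<le> \<mu>\<close>. Membership \<open>f \<in> S\<^sub>0\<close> follows in the same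
  way, since \<open>|f(x,y)|\<close> is bounded by the Lipschitz norms of both sections through \<open>(x,y)\<close>.\<close>

section \<open>The Lipschitz seminorm on the real line\<close>

lemma AE_lebesgue_translate:
  fixes P :: "real \<Rightarrow> bool"
  assumes "AE x in lebesgue. P x"
  shows "AE x in lebesgue. P (x + h)"
proof -
  obtain N where N: "N \<in> null_sets lborel" "{x. \<not> P x} \<subseteq> N"
    using assms[unfolded AE_completion_iff] unfolding eventually_ae_filter by auto
  have [measurable]: "N \<in> sets borel" using N(1) by (auto simp: null_sets_def)
  have "AE x in lborel. h + 1 * x \<notin> N"
    using AE_not_in[OF N(1)] by (intro AE_borel_affine) auto
  then show ?thesis
    unfolding AE_completion_iff by (rule eventually_mono) (use N(2) in \<open>auto simp: add.commute\<close>)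
qed

lemma esssup_lebesgue_translate:
  fixes g :: "real \<Rightarrow> ereal"
  assumes [measurable]: "g \<in> borel_measurable borel"
  shows "esssup lebesgue (\<lambda>x. g (x + q)) = esssup lebesgue g"
proof (rule antisym)
  have m: "(\<lambda>x. g (x + q)) \<in> borel_measurable lebesgue" "g \<in> borel_measurable lebesgue"
    by (auto intro: measurable_completion)
  show "esssup lebesgue (\<lambda>x. g (x + q)) \<le> esssup lebesgue g"
    by (rule esssup_I[OF m(1)]) (auto intro: AE_lebesgue_translate esssup_AE)
  have "AE x in lebesgue. g ((x + - q) + q) \<le> esssup lebesgue (\<lambda>x. g (x + q))"
    by (rule AE_lebesgue_translate) (rule esssup_AE)
  then show "esssup lebesgue g \<le> esssup lebesgue (\<lambda>x. g (x + q))"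
    by (intro esssup_I[OF m(2)]) auto
qed

lemma ess_norm_nonneg: "0 \<le> ess_norm g"
proof -
  have "esssup lebesgue (\<lambda>x::real. 0::ereal) = 0"
    by (rule esssup_const) simp
  then show ?thesis
    unfolding ess_norm_def
    using esssup_mono[of "\<lambda>x. 0::ereal" lebesgue "\<lambda>t. ereal \<bar>g t\<bar>"] by simp
qed

lemma lip_semi_nonneg: "0 \<le> lip_semi \<alpha> g"
proof -
  have "0 \<le> ereal (1 powr (-\<alpha>)) * ess_norm (\<lambda>t. g (t + 1) - g t)"
    using ess_norm_nonneg by simp
  also have "\<dots> \<le> lip_semi \<alpha> g" unfolding lip_semi_def by (intro SUP_upper) auto
  finally show ?thesis .
qed

lemma AE_abs_le_lip_norm:
  assumes "ess_norm \<phi> < \<infinity>"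
  shows "AE x in lborel. \<bar>\<phi> x\<bar> \<le> lip_norm \<alpha> \<phi>"
proof -
  obtain e where e: "ess_norm \<phi> = ereal e"
    using assms ess_norm_nonneg[of \<phi>] by (cases "ess_norm \<phi>") auto
  have "0 \<le> real_of_ereal (lip_semi \<alpha> \<phi>)" by (simp add: lip_semi_nonneg real_of_ereal_pos)
  then have "e \<le> lip_norm \<alpha> \<phi>" by (simp add: lip_norm_def e)
  moreover have "AE x in lebesgue. ereal \<bar>\<phi> x\<bar> \<le> ess_norm \<phi>" unfolding ess_norm_def by (rule esssup_AE)
  ultimately have "AE x in lebesgue. \<bar>\<phi> x\<bar> \<le> lip_norm \<alpha> \<phi>"
    unfolding e by (auto elim!: eventually_mono)
  then show ?thesis by (simp add: AE_completion_iff)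
qed

lemma abs_real_lip_semi_le_lip_norm: "\<bar>real_of_ereal (lip_semi \<alpha> \<phi>)\<bar> \<le> \<bar>lip_norm \<alpha> \<phi>\<bar>"
  using lip_semi_nonneg[of \<alpha> \<phi>] ess_norm_nonneg[of \<phi>]
  by (simp add: lip_norm_def real_of_ereal_pos)

lemma ereal_powr_neg_mult_le_iff:
  fixes E C :: ereal and h :: real
  assumes "h > 0"
  shows "ereal (h powr -\<alpha>) * E \<le> C \<longleftrightarrow> E \<le> ereal (h powr \<alpha>) * C"
proof -
  have "ereal (h powr -\<alpha>) * E \<le> C \<longleftrightarrow> E \<le> C / ereal (h powr -\<alpha>)"
    using assms by (simp add: ereal_le_divide_pos)
  also have "C / ereal (h powr -\<alpha>) = ereal (h powr \<alpha>) * C"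
    using assms by (cases C) (auto simp: powr_minus divide_ereal_def field_simps)
  finally show ?thesis .
qed

lemma ess_norm_diff_le_lip_semi:
  assumes "h > 0"
  shows "ess_norm (\<lambda>t. \<phi> (t + h) - \<phi> t) \<le> ereal (h powr \<alpha>) * lip_semi \<alpha> \<phi>"
proof -
  have "ereal (h powr (-\<alpha>)) * ess_norm (\<lambda>t. \<phi> (t + h) - \<phi> t) \<le> lip_semi \<alpha> \<phi>"
    unfolding lip_semi_def using assms by (intro SUP_upper) auto
  then show ?thesis using assms by (simp add: ereal_powr_neg_mult_le_iff)
qed

lemma AE_diff_le_lip_semi:
  assumes L: "lip_semi \<alpha> \<phi> \<le> ereal a" and h': "0 < h'" "h' \<le> h" and \<alpha>: "\<alpha> > 0"
  shows "AE x in lborel. \<bar>\<phi> (x + h') - \<phi> x\<bar> \<le> a * h powr \<alpha>"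
proof -
  have a: "0 \<le> a" using lip_semi_nonneg[of \<alpha> \<phi>] L by (metis ereal_less_eq(5) order.trans)
  have "ess_norm (\<lambda>t. \<phi> (t + h') - \<phi> t) \<le> ereal (h' powr \<alpha>) * lip_semi \<alpha> \<phi>"
    using h'(1) by (rule ess_norm_diff_le_lip_semi)
  also have "\<dots> \<le> ereal (h' powr \<alpha>) * ereal a" using L by (intro ereal_mult_left_mono) auto
  also have "\<dots> \<le> ereal (a * h powr \<alpha>)"
    using h' \<alpha> a by (simp add: mult.commute mult_left_mono powr_mono2)
  finally have bound: "ess_norm (\<lambda>t. \<phi> (t + h') - \<phi> t) \<le> ereal (a * h powr \<alpha>)" .
  have "AE x in lebesgue. ereal \<bar>\<phi> (x + h') - \<phi> x\<bar> \<le> ess_norm (\<lambda>t. \<phi> (t + h') - \<phi> t)"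
    unfolding ess_norm_def by (rule esssup_AE)
  then show ?thesis
    unfolding AE_completion_iff by (rule eventually_mono) (use bound in \<open>metis ereal_less_eq(3) order.trans\<close>)
qed

lemma lip_semi_AE_cong:
  fixes \<phi> \<psi> :: "real \<Rightarrow> real"
  assumes [measurable]: "\<psi> \<in> borel_measurable borel" and eq: "AE x in lborel. \<phi> x = \<psi> x"
  shows "lip_semi \<alpha> \<phi> = lip_semi \<alpha> \<psi>"
proof -
  have "ess_norm (\<lambda>t. \<phi> (t + h) - \<phi> t) = ess_norm (\<lambda>t. \<psi> (t + h) - \<psi> t)" for h
  proof -
    have eq': "AE x in lebesgue. \<phi> x = \<psi> x" using eq by (simp add: AE_completion_iff)
    have ae: "AE x in lebesgue. \<psi> (x + h) - \<psi> x = \<phi> (x + h) - \<phi> x"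
      using AE_lebesgue_translate[OF eq', of h] eq' by eventually_elim simp
    have "(\<lambda>x. \<psi> (x + h) - \<psi> x) \<in> borel_measurable lebesgue"
      by (auto intro: measurable_completion)
    then have [measurable]: "(\<lambda>x. \<phi> (x + h) - \<phi> x) \<in> borel_measurable lebesgue"
      using ae by (rule borel_measurable_AE)
    show ?thesis
      unfolding ess_norm_def using ae by (intro esssup_AE_cong) (auto intro: measurable_completion)
  qed
  then show ?thesis unfolding lip_semi_def by simp
qed

lemma ess_norm_diff_subadditive:
  fixes \<phi> :: "real \<Rightarrow> real"
  assumes [measurable]: "\<phi> \<in> borel_measurable borel"
  shows "ess_norm (\<lambda>t. \<phi> (t + (q + r)) - \<phi> t)
    \<le> ess_norm (\<lambda>t. \<phi> (t + q) - \<phi> t) + ess_norm (\<lambda>t. \<phi> (t + r) - \<phi> t)"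
proof -
  have "ess_norm (\<lambda>t. \<phi> (t + (q + r)) - \<phi> t)
      \<le> esssup lebesgue (\<lambda>t. ereal \<bar>\<phi> (t + q) - \<phi> t\<bar> + ereal \<bar>\<phi> ((t + q) + r) - \<phi> (t + q)\<bar>)"
    unfolding ess_norm_def
    by (intro esssup_mono) (auto intro: measurable_completion simp: add.assoc)
  also have "\<dots> \<le> ess_norm (\<lambda>t. \<phi> (t + q) - \<phi> t)
      + esssup lebesgue (\<lambda>t. (\<lambda>s. ereal \<bar>\<phi> (s + r) - \<phi> s\<bar>) (t + q))"
    unfolding ess_norm_def by (rule esssup_add)
  also have "esssup lebesgue (\<lambda>t. (\<lambda>s. ereal \<bar>\<phi> (s + r) - \<phi> s\<bar>) (t + q))
      = ess_norm (\<lambda>t. \<phi> (t + r) - \<phi> t)"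
    unfolding ess_norm_def by (rule esssup_lebesgue_translate) simp
  finally show ?thesis .
qed

lemma exists_Rats_powr_dist_less:
  fixes h e \<alpha> :: real
  assumes "\<alpha> > 0" "h > 0" "e > 0"
  obtains q where "q \<in> \<rat>" "0 < q" "q < h" "(h - q) powr \<alpha> < e"
proof -
  define \<delta> where "\<delta> = min (h / 2) (e powr (1 / \<alpha>))"
  have \<delta>: "0 < \<delta>" "\<delta> \<le> h / 2" "\<delta> \<le> e powr (1 / \<alpha>)" unfolding \<delta>_def using assms by auto
  obtain q where q: "q \<in> \<rat>" "h - \<delta> < q" "q < h" using Rats_dense_in_real[of "h - \<delta>" h] \<delta> by auto
  have "(h - q) powr \<alpha> < \<delta> powr \<alpha>" using q assms by (intro powr_less_mono2) auto
  also have "\<dots> \<le> (e powr (1 / \<alpha>)) powr \<alpha>" using \<delta> assms by (intro powr_mono2) auto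
  also have "\<dots> = e" using assms by (simp add: powr_powr)
  finally show ?thesis using that q \<delta> by auto
qed

text \<open>Restricting to rational increments makes the seminorm of the sections of a Borel function
  on \<open>\<real>\<^sup>2\<close> measurable in the other variable.\<close>

lemma lip_semi_eq_SUP_Rats:
  fixes \<phi> :: "real \<Rightarrow> real"
  assumes [measurable]: "\<phi> \<in> borel_measurable borel" and \<alpha>: "\<alpha> > 0"
    and fin: "lip_semi \<alpha> \<phi> < \<infinity>"
  shows "lip_semi \<alpha> \<phi> = (SUP q\<in>{q\<in>\<rat>. 0 < q}. ereal (q powr (-\<alpha>)) * ess_norm (\<lambda>t. \<phi> (t + q) - \<phi> t))"
    (is "_ = ?Q")
proof (rule antisym)
  define E where "E h = ess_norm (\<lambda>t. \<phi> (t + h) - \<phi> t)" for h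
  obtain L where L: "lip_semi \<alpha> \<phi> = ereal L" "0 \<le> L"
    using fin lip_semi_nonneg[of \<alpha> \<phi>] by (cases "lip_semi \<alpha> \<phi>") auto
  have EQ: "E q \<le> ereal (q powr \<alpha>) * ?Q" if "q \<in> \<rat>" "q > 0" for q
  proof -
    have "ereal (q powr (-\<alpha>)) * E q \<le> ?Q" unfolding E_def using that by (intro SUP_upper) auto
    then show ?thesis using that by (simp add: ereal_powr_neg_mult_le_iff)
  qed
  have "ereal (h powr (-\<alpha>)) * E h \<le> ?Q" if h: "h > 0" for h
  proof -
    have Q0: "0 \<le> ?Q" using ess_norm_nonneg by (intro SUP_upper2[of 1]) auto
    have "E h \<le> ereal (h powr \<alpha>) * ?Q + ereal e" if e: "e > 0" for e
    proof -
      obtain q where q: "q \<in> \<rat>" "0 < q" "q < h" "(h - q) powr \<alpha> < e / (L + 1)"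
        using exists_Rats_powr_dist_less[OF \<alpha> h, of "e / (L + 1)"] e L by auto
      have "(h - q) powr \<alpha> * L \<le> e / (L + 1) * L" using q L by (intro mult_right_mono) auto
      also have "\<dots> \<le> e" using e L by (simp add: field_simps)
      finally have small: "(h - q) powr \<alpha> * L \<le> e" .
      have "E h \<le> E q + E (h - q)" unfolding E_def using ess_norm_diff_subadditive[of \<phi> q "h - q"] by simp
      also have "\<dots> \<le> ereal (q powr \<alpha>) * ?Q + ereal ((h - q) powr \<alpha>) * ereal L"
        using EQ[OF q(1,2)] ess_norm_diff_le_lip_semi[of "h - q" \<phi> \<alpha>] q L unfolding E_def
        by (intro add_mono) auto
      also have "\<dots> \<le> ereal (h powr \<alpha>) * ?Q + ereal e"
        using q small Q0 \<alpha> by (intro add_mono ereal_mult_right_mono) (auto intro: powr_mono2)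
      finally show ?thesis .
    qed
    then have "E h \<le> ereal (h powr \<alpha>) * ?Q" by (rule ereal_le_epsilon2)
    then show ?thesis using h by (simp add: ereal_powr_neg_mult_le_iff)
  qed
  then show "lip_semi \<alpha> \<phi> \<le> ?Q" unfolding lip_semi_def E_def by (intro SUP_least) auto
  show "?Q \<le> lip_semi \<alpha> \<phi>" unfolding lip_semi_def by (rule SUP_subset_mono) auto
qed

lemma obtain_point_AE_bounded_increments:
  fixes \<phi> :: "real \<Rightarrow> real"
  assumes [measurable]: "\<phi> \<in> borel_measurable borel"
    and incr: "\<And>h'. 0 < h' \<Longrightarrow> h' \<le> h \<Longrightarrow> AE x in lborel. \<bar>\<phi> (x + h') - \<phi> x\<bar> \<le> K"
    and pos: "emeasure lborel {x. \<mu> < \<bar>\<phi> x\<bar>} \<noteq> 0"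
  obtains x\<^sub>0 where "\<mu> < \<bar>\<phi> x\<^sub>0\<bar>"
    "AE h' in lborel. 0 < h' \<and> h' \<le> h \<longrightarrow> \<bar>\<phi> (x\<^sub>0 + h') - \<phi> x\<^sub>0\<bar> \<le> K"
proof -
  define P where "P h' x \<longleftrightarrow> (0 < h' \<and> h' \<le> h \<longrightarrow> \<bar>\<phi> (x + h') - \<phi> x\<bar> \<le> K)" for h' x
  have "AE h' in lborel. AE x in lborel. P h' x"
  proof (rule AE_I2)
    fix h'
    show "AE x in lborel. P h' x"
      using incr[of h'] unfolding P_def by (cases "0 < h' \<and> h' \<le> h") (auto elim: eventually_mono)
  qed
  moreover have "{z \<in> space (lborel \<Otimes>\<^sub>M lborel). P (fst z) (snd z)} \<in> sets (lborel \<Otimes>\<^sub>M lborel)"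
    unfolding P_def by measurable
  note lborel_pair.AE_commute[OF this]
  ultimately have ae: "AE x in lborel. AE h' in lborel. P h' x" by simp
  show ?thesis
  proof (rule ccontr)
    assume "\<not> ?thesis"
    then have "AE x in lborel. \<not> \<mu> < \<bar>\<phi> x\<bar>"
      using ae that unfolding P_def by (auto elim: eventually_mono)
    then have "emeasure lborel {x \<in> space lborel. \<mu> < \<bar>\<phi> x\<bar>} = 0" by (rule emeasure_eq_0_AE)
    with pos show False by simp
  qed
qed

lemma emeasure_superlevel_ge_of_bounded_increments:
  fixes \<phi> :: "real \<Rightarrow> real"
  assumes [measurable]: "\<phi> \<in> borel_measurable borel"
    and h: "h > 0" and \<mu>: "lam + K \<le> \<mu>"
    and incr: "\<And>h'. 0 < h' \<Longrightarrow> h' \<le> h \<Longrightarrow> AE x in lborel. \<bar>\<phi> (x + h') - \<phi> x\<bar> \<le> K"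
    and pos: "emeasure lborel {x. \<mu> < \<bar>\<phi> x\<bar>} \<noteq> 0"
  shows "ennreal h \<le> emeasure lborel {x. lam < \<bar>\<phi> x\<bar>}"
proof -
  obtain x\<^sub>0 where x\<^sub>0: "\<mu> < \<bar>\<phi> x\<^sub>0\<bar>"
    "AE h' in lborel. 0 < h' \<and> h' \<le> h \<longrightarrow> \<bar>\<phi> (x\<^sub>0 + h') - \<phi> x\<^sub>0\<bar> \<le> K"
    by (rule obtain_point_AE_bounded_increments[of \<phi> h K \<mu>, OF _ incr pos]) simp_all
  have "AE h' in lborel. h' \<in> {0<..h} \<longrightarrow> lam < \<bar>\<phi> (x\<^sub>0 + h')\<bar>"
    using x\<^sub>0(2) by (rule eventually_mono) (use x\<^sub>0(1) \<mu> in auto)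
  then have "AE u in lborel. - x\<^sub>0 + 1 * u \<in> {0<..h} \<longrightarrow> lam < \<bar>\<phi> (x\<^sub>0 + (- x\<^sub>0 + 1 * u))\<bar>"
    by (intro AE_borel_affine) auto
  then have "AE u in lborel. u \<in> {x\<^sub>0<..x\<^sub>0 + h} \<longrightarrow> u \<in> {x. lam < \<bar>\<phi> x\<bar>}"
    by (rule eventually_mono) auto
  then have "emeasure lborel {x\<^sub>0<..x\<^sub>0 + h} \<le> emeasure lborel {x. lam < \<bar>\<phi> x\<bar>}"
  proof (rule emeasure_mono_AE)
    have "{x \<in> space lborel. lam < \<bar>\<phi> x\<bar>} \<in> sets lborel" by measurable
    then show "{x. lam < \<bar>\<phi> x\<bar>} \<in> sets lborel" by simp
  qed
  then show ?thesis using h by simp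
qed

section \<open>The non-increasing rearrangement\<close>

lemma sets_lebesgue_abs_greater[measurable]:
  fixes g :: "'a::euclidean_space \<Rightarrow> real"
  assumes [measurable]: "g \<in> borel_measurable lebesgue"
  shows "{x. c < \<bar>g x\<bar>} \<in> sets lebesgue"
proof -
  have "{x \<in> space lebesgue. c < \<bar>g x\<bar>} \<in> sets lebesgue" by measurable
  then show ?thesis by simp
qed

lemma S0_AE_dominated:
  fixes g \<psi> :: "'a::euclidean_space \<Rightarrow> real"
  assumes "S0 \<psi>" "g \<in> borel_measurable lebesgue" "AE x in lebesgue. \<bar>g x\<bar> \<le> \<bar>\<psi> x\<bar>"
  shows "S0 g"
proof -
  have "emeasure lebesgue {x. s < \<bar>g x\<bar>} \<le> emeasure lebesgue {x. s < \<bar>\<psi> x\<bar>}" for s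
  proof (rule emeasure_mono_AE)
    show "AE x in lebesgue. x \<in> {x. s < \<bar>g x\<bar>} \<longrightarrow> x \<in> {x. s < \<bar>\<psi> x\<bar>}"
      using assms(3) by (rule eventually_mono) auto
    show "{x. s < \<bar>\<psi> x\<bar>} \<in> sets lebesgue"
      using assms(1) unfolding S0_def by (intro sets_lebesgue_abs_greater) blast
  qed
  then show ?thesis using assms unfolding S0_def by (meson order.strict_trans1)
qed

lemma S0_AE_cong:
  fixes g G :: "'a::euclidean_space \<Rightarrow> real"
  assumes "S0 g" "AE x in lebesgue. g x = G x"
  shows "S0 G"
proof (rule S0_AE_dominated[OF assms(1)])
  show "G \<in> borel_measurable lebesgue"
    using assms(1) unfolding S0_def by (intro borel_measurable_AE[OF _ assms(2)]) blast
  show "AE x in lebesgue. \<bar>G x\<bar> \<le> \<bar>g x\<bar>" using assms(2) by (rule eventually_mono) simp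
qed

lemma rearr_le:
  fixes g :: "'a::euclidean_space \<Rightarrow> real"
  assumes "0 \<le> u" "emeasure lebesgue {x. u < \<bar>g x\<bar>} \<le> ennreal t"
  shows "rearr g t \<le> u"
  unfolding rearr_def using assms by (intro cInf_lower) (auto intro: bdd_belowI[of _ 0])

lemma rearr_set_nonempty:
  fixes g :: "'a::euclidean_space \<Rightarrow> real"
  assumes "S0 g" "t > 0"
  shows "{s. 0 \<le> s \<and> emeasure lebesgue {x. s < \<bar>g x\<bar>} \<le> ennreal t} \<noteq> {}"
proof -
  define A where "A n = {x. real (Suc n) < \<bar>g x\<bar>}" for n
  have [measurable]: "g \<in> borel_measurable lebesgue" using assms(1) by (simp add: S0_def)
  have "(\<Inter>n. A n) = {}"
  proof safe
    fix x assume "x \<in> (\<Inter>n. A n)"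
    moreover obtain n where "\<bar>g x\<bar> < real (Suc n)"
      by (metis reals_Archimedean2 less_trans of_nat_less_iff lessI)
    ultimately show "x \<in> {}" unfolding A_def by (metis (mono_tags) INT_E UNIV_I mem_Collect_eq order.asym)
  qed
  moreover have "emeasure lebesgue (A n) \<noteq> \<infinity>" for n
    using assms(1) unfolding A_def S0_def by (metis infinity_ennreal_def less_irrefl of_nat_0_less_iff zero_less_Suc)
  moreover have "range A \<subseteq> sets lebesgue" "decseq A" unfolding A_def by (auto intro: decseq_SucI)
  ultimately have "(\<lambda>n. emeasure lebesgue (A n)) \<longlonglongrightarrow> 0"
    using Lim_emeasure_decseq[of A lebesgue] by simp
  then have "eventually (\<lambda>n. emeasure lebesgue (A n) < ennreal t) sequentially"
    using assms(2) by (intro order_tendstoD) auto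
  then obtain n where "emeasure lebesgue (A n) < ennreal t"
    by (auto simp: eventually_sequentially)
  then have "real (Suc n) \<in> {s. 0 \<le> s \<and> emeasure lebesgue {x. s < \<bar>g x\<bar>} \<le> ennreal t}"
    unfolding A_def by auto
  then show ?thesis by blast
qed

lemma rearr_nonneg:
  fixes g :: "'a::euclidean_space \<Rightarrow> real"
  assumes "S0 g" "t > 0"
  shows "0 \<le> rearr g t"
  unfolding rearr_def using rearr_set_nonempty[OF assms] by (intro cInf_greatest) auto

lemma emeasure_superlevel_eq_SUP:
  fixes g :: "'a::euclidean_space \<Rightarrow> real"
  assumes [measurable]: "g \<in> borel_measurable lebesgue"
  shows "emeasure lebesgue {x. r < \<bar>g x\<bar>} = (SUP n. emeasure lebesgue {x. r + 1 / real (Suc n) < \<bar>g x\<bar>})"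
proof -
  define A where "A n = {x. r + 1 / real (Suc n) < \<bar>g x\<bar>}" for n
  have "incseq A"
  proof (rule incseq_SucI)
    fix n
    have "1 / real (Suc (Suc n)) \<le> 1 / real (Suc n)" by (simp add: frac_le)
    then show "A n \<subseteq> A (Suc n)" unfolding A_def by auto
  qed
  moreover have "range A \<subseteq> sets lebesgue" unfolding A_def by auto
  ultimately have "(SUP n. emeasure lebesgue (A n)) = emeasure lebesgue (\<Union>n. A n)"
    by (intro SUP_emeasure_incseq)
  moreover have "(\<Union>n. A n) = {x. r < \<bar>g x\<bar>}"
  proof safe
    fix x assume "r < \<bar>g x\<bar>"
    then obtain n where "1 / real (Suc n) < \<bar>g x\<bar> - r"
      using reals_Archimedean by (metis diff_gt_0_iff_gt inverse_eq_divide)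
    then have "r + 1 / real (Suc n) < \<bar>g x\<bar>" by linarith
    then show "x \<in> (\<Union>n. A n)" unfolding A_def by blast
  next
    fix x n assume "x \<in> A n"
    moreover have "0 < 1 / real (Suc n)" by simp
    ultimately show "r < \<bar>g x\<bar>" unfolding A_def mem_Collect_eq by linarith
  qed
  ultimately have "(SUP n. emeasure lebesgue (A n)) = emeasure lebesgue {x. r < \<bar>g x\<bar>}" by simp
  then show ?thesis unfolding A_def by (rule sym)
qed

lemma emeasure_rearr_level_le:
  fixes g :: "'a::euclidean_space \<Rightarrow> real"
  assumes "S0 g" "t > 0"
  shows "emeasure lebesgue {x. rearr g t < \<bar>g x\<bar>} \<le> ennreal t"
proof -
  have [measurable]: "g \<in> borel_measurable lebesgue" using assms(1) by (simp add: S0_def)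
  have "emeasure lebesgue {x. rearr g t + 1 / real (Suc n) < \<bar>g x\<bar>} \<le> ennreal t" for n
  proof -
    have "Inf {s. 0 \<le> s \<and> emeasure lebesgue {x. s < \<bar>g x\<bar>} \<le> ennreal t} < rearr g t + 1 / real (Suc n)"
      unfolding rearr_def by simp
    from cInf_lessD[OF rearr_set_nonempty[OF assms] this] obtain u where
      u: "emeasure lebesgue {x. u < \<bar>g x\<bar>} \<le> ennreal t" "u < rearr g t + 1 / real (Suc n)" by blast
    have "{x. rearr g t + 1 / real (Suc n) < \<bar>g x\<bar>} \<subseteq> {x. u < \<bar>g x\<bar>}" using u(2) by auto
    then have "emeasure lebesgue {x. rearr g t + 1 / real (Suc n) < \<bar>g x\<bar>} \<le> emeasure lebesgue {x. u < \<bar>g x\<bar>}"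
      by (rule emeasure_mono) simp
    with u(1) show ?thesis by (metis order.trans)
  qed
  then show ?thesis
    by (subst emeasure_superlevel_eq_SUP[OF \<open>g \<in> borel_measurable lebesgue\<close>]) (rule SUP_least)
qed

section \<open>Lebesgue measure on the plane\<close>

lemma sets_borel_greater:
  fixes \<Psi> :: "'a::topological_space \<Rightarrow> 'b::{linorder_topology, second_countable_topology}"
  assumes "\<Psi> \<in> borel_measurable borel"
  shows "{x. s < \<Psi> x} \<in> sets borel"
  using measurable_sets[OF assms, of "{s<..}"] by (simp add: vimage_def)

lemma emeasure_lebesgue_borel:
  assumes "A \<in> sets borel"
  shows "emeasure lebesgue A = emeasure lborel A"
  using assms by (simp add: main_part_sets)

lemma obtain_borel_AE_eq:
  fixes g :: "'a::euclidean_space \<Rightarrow> real"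
  assumes "g \<in> borel_measurable lebesgue"
  obtains G where "G \<in> borel_measurable borel" "AE x in lborel. g x = G x"
  using completion_ex_borel_measurable_real[OF assms] by auto

lemma obtain_borel_pair_AE_eq:
  fixes f :: "real \<times> real \<Rightarrow> real"
  assumes "f \<in> borel_measurable lebesgue"
  obtains F where "F \<in> borel_measurable (borel \<Otimes>\<^sub>M borel)" "AE z in lebesgue. f z = F z"
proof -
  obtain F where "F \<in> borel_measurable borel" "AE z in lborel. f z = F z"
    using obtain_borel_AE_eq[OF assms] .
  then show ?thesis using that by (simp add: borel_prod AE_completion_iff)
qed

lemma borel_measurable_lebesgue_pair:
  fixes G :: "real \<times> real \<Rightarrow> real"
  assumes "G \<in> borel_measurable (borel \<Otimes>\<^sub>M borel)"
  shows "G \<in> borel_measurable lebesgue"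
proof -
  have "G \<in> borel_measurable lborel" using assms by (simp add: borel_prod)
  then show ?thesis by (rule measurable_completion)
qed

lemma emeasure_borel_superlevel_le:
  fixes \<psi> \<Psi> :: "'a::euclidean_space \<Rightarrow> real"
  assumes "\<psi> \<in> borel_measurable lebesgue" "\<Psi> \<in> borel_measurable borel" "AE x in lborel. \<psi> x = \<Psi> x"
  shows "emeasure lborel {x. s < \<Psi> x} \<le> emeasure lebesgue {x. s < \<bar>\<psi> x\<bar>}"
proof -
  have "{x. s < \<Psi> x} \<in> sets borel" using assms(2) by (rule sets_borel_greater)
  then have "emeasure lborel {x. s < \<Psi> x} = emeasure lebesgue {x. s < \<Psi> x}"
    by (rule emeasure_lebesgue_borel[symmetric])
  also have "\<dots> \<le> emeasure lebesgue {x. s < \<bar>\<psi> x\<bar>}"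
  proof (rule emeasure_mono_AE)
    show "AE x in lebesgue. x \<in> {x. s < \<Psi> x} \<longrightarrow> x \<in> {x. s < \<bar>\<psi> x\<bar>}"
      using assms(3) unfolding AE_completion_iff by (rule eventually_mono) auto
  qed (use assms(1) in \<open>rule sets_lebesgue_abs_greater\<close>)
  finally show ?thesis .
qed

lemma emeasure_superlevel_AE_cong:
  fixes g G :: "'a::euclidean_space \<Rightarrow> real"
  assumes "g \<in> borel_measurable lebesgue" "G \<in> borel_measurable lebesgue" "AE x in lebesgue. g x = G x"
  shows "emeasure lebesgue {x. s < \<bar>g x\<bar>} = emeasure lebesgue {x. s < \<bar>G x\<bar>}"
proof (rule emeasure_eq_AE)
  show "AE x in lebesgue. (x \<in> {x. s < \<bar>g x\<bar>}) = (x \<in> {x. s < \<bar>G x\<bar>})"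
    using assms(3) by (rule eventually_mono) simp
  show "{x. s < \<bar>g x\<bar>} \<in> sets lebesgue" using assms(1) by (rule sets_lebesgue_abs_greater)
  show "{x. s < \<bar>G x\<bar>} \<in> sets lebesgue" using assms(2) by (rule sets_lebesgue_abs_greater)
qed

lemma emeasure_superlevel_le_nn_integral:
  fixes g :: "'a \<Rightarrow> ennreal"
  assumes [measurable]: "g \<in> borel_measurable M"
    and int: "(\<integral>\<^sup>+ x. g x \<partial>M) \<le> ennreal c" and h: "h > 0"
  shows "emeasure M {x \<in> space M. ennreal h \<le> g x} \<le> ennreal (c / h)"
proof -
  define Y where "Y = {x \<in> space M. ennreal h \<le> g x}"
  have [measurable]: "Y \<in> sets M" unfolding Y_def by measurable
  have "ennreal h * emeasure M Y = (\<integral>\<^sup>+ x. ennreal h * indicator Y x \<partial>M)"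
    by (simp add: nn_integral_cmult_indicator)
  also have "\<dots> \<le> (\<integral>\<^sup>+ x. g x \<partial>M)"
    by (intro nn_integral_mono) (auto simp: Y_def indicator_def)
  finally have "ennreal h * emeasure M Y \<le> ennreal c" using int by simp
  then have "ennreal (1 / h) * (ennreal h * emeasure M Y) \<le> ennreal (1 / h) * ennreal c"
    by (rule mult_left_mono) simp
  then show ?thesis
    using h unfolding Y_def by (simp add: mult.assoc[symmetric] ennreal_mult[symmetric] ennreal_mult'[symmetric])
qed

lemma AE_lebesgue_pair_iff:
  "(AE z in (lebesgue :: (real \<times> real) measure). P z) \<longleftrightarrow> (AE z in lborel \<Otimes>\<^sub>M lborel. P z)"
  by (metis AE_completion_iff lborel_prod)

lemma AE_lebesgue_pair_sections:
  fixes P :: "real \<times> real \<Rightarrow> bool"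
  assumes "AE z in lebesgue. P z"
  shows "AE y in lborel. AE x in lborel. P (x, y)" and "AE x in lborel. AE y in lborel. P (x, y)"
proof -
  have "AE z in lborel \<Otimes>\<^sub>M lborel. P z" using assms by (simp add: AE_lebesgue_pair_iff)
  then obtain N where N: "N \<in> sets (lborel \<Otimes>\<^sub>M lborel)" "emeasure (lborel \<Otimes>\<^sub>M lborel) N = 0"
      "{z \<in> space (lborel \<Otimes>\<^sub>M lborel). \<not> P z} \<subseteq> N"
    unfolding eventually_ae_filter null_sets_def by auto
  have "AE z in lborel \<Otimes>\<^sub>M lborel. z \<notin> N" using N by (intro AE_not_in) auto
  from lborel_pair.AE_pair[OF this] have xy: "AE x in lborel. AE y in lborel. (x, y) \<notin> N" by simp
  have "{z \<in> space (lborel \<Otimes>\<^sub>M lborel). (fst z, snd z) \<notin> N} = space (lborel \<Otimes>\<^sub>M lborel) - N"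
    by auto
  then have "{z \<in> space (lborel \<Otimes>\<^sub>M lborel). (fst z, snd z) \<notin> N} \<in> sets (lborel \<Otimes>\<^sub>M lborel)"
    using N(1) by (metis sets.compl_sets)
  from lborel_pair.AE_commute[OF this] have yx: "AE y in lborel. AE x in lborel. (x, y) \<notin> N"
    using xy by simp
  show "AE y in lborel. AE x in lborel. P (x, y)"
    using yx by (rule eventually_mono) (rule eventually_mono, use N(3) in \<open>auto simp: space_pair_measure\<close>)
  show "AE x in lborel. AE y in lborel. P (x, y)"
    using xy by (rule eventually_mono) (rule eventually_mono, use N(3) in \<open>auto simp: space_pair_measure\<close>)
qed

lemma sets_lborel_pair: "sets (lborel \<Otimes>\<^sub>M lborel) = sets (borel \<Otimes>\<^sub>M (borel :: real measure))"
  by (intro sets_pair_measure_cong) auto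

lemma AE_lebesgue_pairI:
  fixes P :: "real \<times> real \<Rightarrow> bool"
  assumes "Measurable.pred (borel \<Otimes>\<^sub>M borel) P"
    and "AE x in lborel. AE y in lborel. P (x, y)"
  shows "AE z in lebesgue. P z"
proof -
  have "{z \<in> space (lborel \<Otimes>\<^sub>M lborel). P z} \<in> sets (lborel \<Otimes>\<^sub>M lborel)"
    unfolding sets_lborel_pair using assms(1) by (simp add: pred_def space_pair_measure)
  then have "AE z in lborel \<Otimes>\<^sub>M lborel. P z" using assms(2) by (rule lborel_pair.AE_pair_measure)
  then show ?thesis by (simp add: AE_lebesgue_pair_iff)
qed

lemma AE_lebesgue_pairI':
  fixes P :: "real \<times> real \<Rightarrow> bool"
  assumes "Measurable.pred (borel \<Otimes>\<^sub>M borel) P"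
    and "AE y in lborel. AE x in lborel. P (x, y)"
  shows "AE z in lebesgue. P z"
proof -
  have "{z \<in> space (lborel \<Otimes>\<^sub>M lborel). P (fst z, snd z)} \<in> sets (lborel \<Otimes>\<^sub>M lborel)"
    unfolding sets_lborel_pair using assms(1) by (simp add: pred_def space_pair_measure)
  from lborel_pair.AE_commute[OF this] have "AE x in lborel. AE y in lborel. P (x, y)"
    using assms(2) by simp
  then show ?thesis by (rule AE_lebesgue_pairI[OF assms(1)])
qed

lemma sets_lborel_eq_pair: "sets (lborel :: (real \<times> real) measure) = sets (borel \<Otimes>\<^sub>M borel)"
  by (metis borel_prod sets_lborel)

lemma
  fixes A B :: "real set"
  assumes "A \<in> sets borel" "B \<in> sets borel"
  shows sets_lebesgue_Times: "A \<times> B \<in> sets lebesgue"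
    and emeasure_lebesgue_Times: "emeasure lebesgue (A \<times> B) = emeasure lborel A * emeasure lborel B"
proof -
  have AB: "A \<times> B \<in> sets (lborel :: (real \<times> real) measure)"
    unfolding sets_lborel_eq_pair using assms by auto
  then show "A \<times> B \<in> sets lebesgue" by simp
  have "emeasure lebesgue (A \<times> B) = emeasure (lborel \<Otimes>\<^sub>M lborel) (A \<times> B)"
    using AB by (simp add: lborel_prod)
  also have "\<dots> = emeasure lborel A * emeasure lborel B"
    using assms by (intro lborel.emeasure_pair_measure_Times) auto
  finally show "emeasure lebesgue (A \<times> B) = emeasure lborel A * emeasure lborel B" .
qed

lemma emeasure_lebesgue_le_Times_AE:
  fixes A B :: "real set" and D :: "(real \<times> real) set"
  assumes "D \<in> sets lebesgue" "A \<in> sets borel" "B \<in> sets borel"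
    and "AE z in lebesgue. z \<in> D \<longrightarrow> z \<in> A \<times> B"
  shows "emeasure lebesgue D \<le> emeasure lborel A * emeasure lborel B"
  using emeasure_mono_AE[OF assms(4) sets_lebesgue_Times[OF assms(2,3)]]
  by (simp add: emeasure_lebesgue_Times[OF assms(2,3)])

lemma
  fixes D :: "(real \<times> real) set"
  assumes "D \<in> sets borel"
  shows emeasure_lebesgue_eq_nn_integral_sections:
      "emeasure lebesgue D = (\<integral>\<^sup>+ y. emeasure lborel {x. (x, y) \<in> D} \<partial>lborel)"
    and emeasure_lebesgue_eq_nn_integral_sections':
      "emeasure lebesgue D = (\<integral>\<^sup>+ x. emeasure lborel {y. (x, y) \<in> D} \<partial>lborel)"
proof -
  have D: "D \<in> sets (lborel \<Otimes>\<^sub>M lborel)" using assms by (metis lborel_prod sets_lborel)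
  have "emeasure lebesgue D = emeasure (lborel :: (real \<times> real) measure) D" using assms by simp
  then have "emeasure lebesgue D = emeasure (lborel \<Otimes>\<^sub>M lborel) D" by (simp add: lborel_prod)
  then show "emeasure lebesgue D = (\<integral>\<^sup>+ y. emeasure lborel {x. (x, y) \<in> D} \<partial>lborel)"
    and "emeasure lebesgue D = (\<integral>\<^sup>+ x. emeasure lborel {y. (x, y) \<in> D} \<partial>lborel)"
    using lborel_pair.emeasure_pair_measure_alt2[OF D] lborel.emeasure_pair_measure_alt[OF D]
    by (simp_all add: vimage_def)
qed

section \<open>Sections of functions on the plane\<close>

lemma less_esssup_iff:
  assumes "f \<in> borel_measurable M"
  shows "z < esssup M f \<longleftrightarrow> emeasure M {x \<in> space M. z < f x} \<noteq> 0"
proof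
  assume "z < esssup M f"
  then show "emeasure M {x \<in> space M. z < f x} \<noteq> 0" using esssup_pos_measure[OF assms] by force
next
  assume ne: "emeasure M {x \<in> space M. z < f x} \<noteq> 0"
  show "z < esssup M f"
  proof (rule ccontr)
    assume "\<not> z < esssup M f"
    then have "AE x in M. f x \<le> z" using esssup_AE[of f M] by (auto elim: eventually_mono)
    then have "emeasure M {x \<in> space M. z < f x} = 0" by (intro emeasure_eq_0_AE) (auto simp: not_less)
    with ne show False ..
  qed
qed

lemma borel_measurable_esssup_section:
  fixes g :: "real \<times> real \<Rightarrow> ereal"
  assumes [measurable]: "g \<in> borel_measurable borel"
  shows "(\<lambda>y. esssup lebesgue (\<lambda>x. g (x, y))) \<in> borel_measurable borel"
proof -
  have esssup_lborel: "esssup lebesgue (\<lambda>x. g (x, y)) = esssup lborel (\<lambda>x. g (x, y))" for y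
    by (simp add: esssup_eq_AE measurable_completion AE_completion_iff)
  have sets: "{p \<in> space (lborel \<Otimes>\<^sub>M lborel). z < g p} \<in> sets (lborel \<Otimes>\<^sub>M lborel)" for z
    unfolding lborel_prod by measurable
  have "{y. z < esssup lborel (\<lambda>x. g (x, y))}
      = {y \<in> space lborel. emeasure lborel ((\<lambda>x. (x, y)) -` {p \<in> space (lborel \<Otimes>\<^sub>M lborel). z < g p}) \<noteq> 0}"
    for z by (auto simp: less_esssup_iff space_pair_measure vimage_def)
  moreover have "\<dots> z \<in> sets lborel" for z
    using lborel_pair.measurable_emeasure_Pair2[OF sets[of z]] by measurable
  ultimately have "(\<lambda>y. esssup lborel (\<lambda>x. g (x, y))) \<in> borel_measurable borel"
    by (intro borel_measurableI_greater) simp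
  then show ?thesis by (simp add: esssup_lborel)
qed

lemma borel_measurable_section:
  fixes F :: "real \<Rightarrow> real \<Rightarrow> real"
  assumes F: "(\<lambda>z. F (fst z) (snd z)) \<in> borel_measurable (borel \<Otimes>\<^sub>M borel)"
  shows "(\<lambda>x. F x y) \<in> borel_measurable borel"
proof -
  have "(\<lambda>x. (x, y)) \<in> borel \<rightarrow>\<^sub>M borel \<Otimes>\<^sub>M borel" by measurable
  from measurable_compose[OF this F] show ?thesis by simp
qed

lemma borel_measurable_SUP_Rats_section:
  fixes F :: "real \<Rightarrow> real \<Rightarrow> real"
  assumes F[measurable]: "(\<lambda>z. F (fst z) (snd z)) \<in> borel_measurable (borel \<Otimes>\<^sub>M borel)"
  shows "(\<lambda>y. SUP q\<in>{q\<in>\<rat>. 0 < q}. ereal (q powr (-\<alpha>)) * ess_norm (\<lambda>t. F (t + q) y - F t y))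
    \<in> borel_measurable borel"
proof -
  have "(\<lambda>y. ess_norm (\<lambda>t. F (t + q) y - F t y)) \<in> borel_measurable borel" for q
  proof -
    have "(\<lambda>z. (fst z + q, snd z)) \<in> (borel \<Otimes>\<^sub>M borel) \<rightarrow>\<^sub>M (borel \<Otimes>\<^sub>M borel)" by measurable
    from measurable_compose[OF this F]
    have [measurable]: "(\<lambda>z. F (fst z + q) (snd z)) \<in> borel_measurable (borel \<Otimes>\<^sub>M borel)" by simp
    have "(\<lambda>z. ereal \<bar>F (fst z + q) (snd z) - F (fst z) (snd z)\<bar>) \<in> borel_measurable (borel \<Otimes>\<^sub>M borel)"
      by measurable
    then show ?thesis
      unfolding ess_norm_def borel_prod using borel_measurable_esssup_section by fastforce
  qed
  moreover have "countable {q\<in>\<rat>. (0::real) < q}" by (rule countable_subset[OF _ countable_rat]) auto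
  ultimately show ?thesis by (intro borel_measurable_SUP borel_measurable_ereal_times) auto
qed

lemma obtain_borel_lip_semi_section:
  fixes f F :: "real \<Rightarrow> real \<Rightarrow> real" and \<alpha> :: real
  defines "\<phi> \<equiv> \<lambda>y. real_of_ereal (lip_semi \<alpha> (\<lambda>x. f x y))"
  assumes F[measurable]: "(\<lambda>z. F (fst z) (snd z)) \<in> borel_measurable (borel \<Otimes>\<^sub>M borel)"
    and \<alpha>: "\<alpha> > 0"
    and eq: "AE y in lborel. AE x in lborel. f x y = F x y"
    and lip: "AE y in lborel. Lip_class \<alpha> (\<lambda>x. f x y)"
    and S: "S0 (\<lambda>y. lip_norm \<alpha> (\<lambda>x. f x y))"
  obtains \<Phi> where "\<Phi> \<in> borel_measurable borel" "AE y in lborel. lip_semi \<alpha> (\<lambda>x. F x y) = ereal (\<Phi> y)"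
    "AE y in lborel. \<phi> y = \<Phi> y" "S0 \<phi>"
proof -
  define Q where
    "Q y = (SUP q\<in>{q\<in>\<rat>. 0 < q}. ereal (q powr (-\<alpha>)) * ess_norm (\<lambda>t. F (t + q) y - F t y))" for y
  have "Q \<in> borel_measurable borel"
    unfolding Q_def using F by (rule borel_measurable_SUP_Rats_section)
  then have \<Phi>[measurable]: "(\<lambda>y. real_of_ereal (Q y)) \<in> borel_measurable borel"
    by (rule borel_measurable_real_of_ereal)
  have fin: "AE y in lborel. lip_semi \<alpha> (\<lambda>x. f x y) < \<infinity>"
    using lip by (rule eventually_mono) (simp add: Lip_class_def)
  have ae: "AE y in lborel.
      lip_semi \<alpha> (\<lambda>x. F x y) = ereal (real_of_ereal (Q y)) \<and> \<phi> y = real_of_ereal (Q y)"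
    using eq fin
  proof eventually_elim
    case (elim y)
    have Fy[measurable]: "(\<lambda>x. F x y) \<in> borel_measurable borel" by (rule borel_measurable_section[OF F])
    have same: "lip_semi \<alpha> (\<lambda>x. f x y) = lip_semi \<alpha> (\<lambda>x. F x y)"
      by (rule lip_semi_AE_cong[OF Fy elim(1)])
    then have "lip_semi \<alpha> (\<lambda>x. F x y) = Q y"
      unfolding Q_def using elim(2) by (intro lip_semi_eq_SUP_Rats[OF Fy \<alpha>]) simp
    then show ?case
      using same elim(2) lip_semi_nonneg[of \<alpha> "\<lambda>x. F x y"] unfolding \<phi>_def by (cases "Q y") auto
  qed
  then have ae\<^sub>1: "AE y in lborel. lip_semi \<alpha> (\<lambda>x. F x y) = ereal (real_of_ereal (Q y))"
    and ae\<^sub>2: "AE y in lborel. \<phi> y = real_of_ereal (Q y)"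
    by (auto elim: eventually_mono)
  have "(\<lambda>y. real_of_ereal (Q y)) \<in> borel_measurable lebesgue" by (auto intro: measurable_completion)
  moreover have "AE y in lebesgue. real_of_ereal (Q y) = \<phi> y"
    unfolding AE_completion_iff using ae\<^sub>2 by (rule eventually_mono) simp
  ultimately have "\<phi> \<in> borel_measurable lebesgue" by (rule borel_measurable_AE)
  moreover have "AE y in lebesgue. \<bar>\<phi> y\<bar> \<le> \<bar>lip_norm \<alpha> (\<lambda>x. f x y)\<bar>"
    unfolding \<phi>_def by (intro AE_I2) (rule abs_real_lip_semi_le_lip_norm)
  ultimately have "S0 \<phi>" by (rule S0_AE_dominated[OF S])
  with \<Phi> ae\<^sub>1 ae\<^sub>2 show ?thesis by (rule that)
qed

lemma AE_superlevel_section_cover: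
  fixes F :: "real \<Rightarrow> real \<Rightarrow> real" and \<Phi> :: "real \<Rightarrow> real"
  assumes F: "(\<lambda>z. F (fst z) (snd z)) \<in> borel_measurable (borel \<Otimes>\<^sub>M borel)"
    and \<alpha>: "\<alpha> > 0" and h: "h > 0"
    and \<Phi>: "AE y in lborel. lip_semi \<alpha> (\<lambda>x. F x y) = ereal (\<Phi> y)"
  shows "AE y in lborel. AE x in lborel. lam + a * h powr \<alpha> < \<bar>F x y\<bar> \<longrightarrow>
    ennreal h \<le> emeasure lborel {x. lam < \<bar>F x y\<bar>} \<or> a < \<Phi> y"
  using \<Phi>
proof (rule eventually_mono)
  fix y assume \<Phi>y: "lip_semi \<alpha> (\<lambda>x. F x y) = ereal (\<Phi> y)"
  have [measurable]: "(\<lambda>x. F x y) \<in> borel_measurable borel" by (rule borel_measurable_section[OF F])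
  show "AE x in lborel. lam + a * h powr \<alpha> < \<bar>F x y\<bar> \<longrightarrow>
    ennreal h \<le> emeasure lborel {x. lam < \<bar>F x y\<bar>} \<or> a < \<Phi> y"
  proof (cases "ennreal h \<le> emeasure lborel {x. lam < \<bar>F x y\<bar>} \<or> a < \<Phi> y")
    case False
    then have "lip_semi \<alpha> (\<lambda>x. F x y) \<le> ereal a" using \<Phi>y by simp
    then have "\<And>h'. 0 < h' \<Longrightarrow> h' \<le> h \<Longrightarrow> AE x in lborel. \<bar>F (x + h') y - F x y\<bar> \<le> a * h powr \<alpha>"
      using AE_diff_le_lip_semi[OF _ _ _ \<alpha>] by blast
    then have "emeasure lborel {x. lam + a * h powr \<alpha> < \<bar>F x y\<bar>} = 0"
      using False emeasure_superlevel_ge_of_bounded_increments[of "\<lambda>x. F x y" h lam "a * h powr \<alpha>"] h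
      by auto
    then have "AE x in lborel. x \<notin> {x. lam + a * h powr \<alpha> < \<bar>F x y\<bar>}"
      by (intro AE_not_in) (simp add: null_sets_def)
    then show ?thesis by (rule eventually_mono) simp
  qed simp
qed

text \<open>Stated for the sections in \<open>x\<close>; the sections in \<open>y\<close> are the instance \<open>F := \<lambda>y x. F x y\<close>.\<close>

lemma superlevel_sections_in_small_set:
  fixes F :: "real \<Rightarrow> real \<Rightarrow> real" and \<Phi> \<phi> :: "real \<Rightarrow> real"
  assumes F[measurable]: "(\<lambda>z. F (fst z) (snd z)) \<in> borel_measurable (borel \<Otimes>\<^sub>M borel)"
    and \<alpha>: "\<alpha> > 0" and [measurable]: "\<Phi> \<in> borel_measurable borel"
    and \<Phi>: "AE y in lborel. lip_semi \<alpha> (\<lambda>x. F x y) = ereal (\<Phi> y)"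
    and \<phi>\<Phi>: "AE y in lborel. \<phi> y = \<Phi> y" and S\<phi>: "S0 \<phi>"
    and s: "s > 0" and h: "h > 0" and c: "c \<ge> 0"
    and int: "(\<integral>\<^sup>+ y. emeasure lborel {x. lam < \<bar>F x y\<bar>} \<partial>lborel) \<le> ennreal c"
  obtains E where "E \<in> sets borel" "emeasure lborel E \<le> ennreal (c / h + s)"
    "AE y in lborel. AE x in lborel. lam + rearr \<phi> s * h powr \<alpha> < \<bar>F x y\<bar> \<longrightarrow> y \<in> E"
proof -
  define Y where "Y = {y. ennreal h \<le> emeasure lborel {x. lam < \<bar>F x y\<bar>}}"
  define A where "A = {y. rearr \<phi> s < \<Phi> y}"
  have "{z \<in> space (borel \<Otimes>\<^sub>M borel). lam < \<bar>F (fst z) (snd z)\<bar>} \<in> sets (borel \<Otimes>\<^sub>M borel)"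
    by measurable
  then have "{z. lam < \<bar>F (fst z) (snd z)\<bar>} \<in> sets (lborel \<Otimes>\<^sub>M lborel)"
    unfolding sets_lborel_pair by (simp add: space_pair_measure)
  from lborel_pair.measurable_emeasure_Pair2[OF this]
  have [measurable]: "(\<lambda>y. emeasure lborel {x. lam < \<bar>F x y\<bar>}) \<in> borel_measurable borel"
    by (simp add: vimage_def)
  have Y: "Y \<in> sets borel" "emeasure lborel Y \<le> ennreal (c / h)"
    using emeasure_superlevel_le_nn_integral[OF _ int h] unfolding Y_def by auto
  have A: "A \<in> sets borel" unfolding A_def by (rule sets_borel_greater) fact
  have "emeasure lborel A \<le> emeasure lebesgue {y. rearr \<phi> s < \<bar>\<phi> y\<bar>}"
    unfolding A_def using S\<phi> \<phi>\<Phi> by (intro emeasure_borel_superlevel_le) (auto simp: S0_def)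
  also have "\<dots> \<le> ennreal s" by (rule emeasure_rearr_level_le[OF S\<phi> s])
  finally have A_le: "emeasure lborel A \<le> ennreal s" .
  have "emeasure lborel (Y \<union> A) \<le> emeasure lborel Y + emeasure lborel A"
    using Y A by (intro emeasure_subadditive) auto
  also have "\<dots> \<le> ennreal (c / h) + ennreal s" using Y(2) A_le by (rule add_mono)
  also have "\<dots> = ennreal (c / h + s)" using c s h by (simp add: ennreal_plus)
  finally have "emeasure lborel (Y \<union> A) \<le> ennreal (c / h + s)" .
  moreover have "AE y in lborel. AE x in lborel. lam + rearr \<phi> s * h powr \<alpha> < \<bar>F x y\<bar> \<longrightarrow> y \<in> Y \<union> A"
    using AE_superlevel_section_cover[OF F \<alpha> h \<Phi>, of lam "rearr \<phi> s"] unfolding Y_def A_def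
    by (auto elim: eventually_mono)
  ultimately show ?thesis using that Y A by blast
qed

lemma superlevel_set_in_small_rectangle:
  fixes F :: "real \<times> real \<Rightarrow> real" and \<Phi>\<^sub>1 \<Phi>\<^sub>2 \<phi>\<^sub>1 \<phi>\<^sub>2 :: "real \<Rightarrow> real"
  assumes F[measurable]: "F \<in> borel_measurable (borel \<Otimes>\<^sub>M borel)" and \<alpha>: "\<alpha> > 0"
    and \<Phi>\<^sub>1: "\<Phi>\<^sub>1 \<in> borel_measurable borel" "AE y in lborel. lip_semi \<alpha> (\<lambda>x. F (x, y)) = ereal (\<Phi>\<^sub>1 y)"
      "AE y in lborel. \<phi>\<^sub>1 y = \<Phi>\<^sub>1 y" "S0 \<phi>\<^sub>1"
    and \<Phi>\<^sub>2: "\<Phi>\<^sub>2 \<in> borel_measurable borel" "AE x in lborel. lip_semi \<alpha> (\<lambda>y. F (x, y)) = ereal (\<Phi>\<^sub>2 x)"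
      "AE x in lborel. \<phi>\<^sub>2 x = \<Phi>\<^sub>2 x" "S0 \<phi>\<^sub>2"
    and pos: "s > 0" "h > 0" "c \<ge> 0"
    and level: "emeasure lebesgue {z. lam < \<bar>F z\<bar>} \<le> ennreal c"
    and \<mu>: "lam + rearr \<phi>\<^sub>1 s * h powr \<alpha> \<le> \<mu>" "lam + rearr \<phi>\<^sub>2 s * h powr \<alpha> \<le> \<mu>"
  shows "emeasure lebesgue {z. \<mu> < \<bar>F z\<bar>} \<le> ennreal ((c / h + s) * (c / h + s))"
proof -
  have D: "{z. lam < \<bar>F z\<bar>} \<in> sets borel"
    using sets_borel_greater[of "\<lambda>z. \<bar>F z\<bar>"] by (simp add: borel_prod[symmetric])
  have int\<^sub>1: "(\<integral>\<^sup>+ y. emeasure lborel {x. lam < \<bar>F (x, y)\<bar>} \<partial>lborel) \<le> ennreal c"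
    using level unfolding emeasure_lebesgue_eq_nn_integral_sections[OF D] by simp
  have int\<^sub>2: "(\<integral>\<^sup>+ x. emeasure lborel {y. lam < \<bar>F (x, y)\<bar>} \<partial>lborel) \<le> ennreal c"
    using level unfolding emeasure_lebesgue_eq_nn_integral_sections'[OF D] by simp
  obtain E\<^sub>1 where E\<^sub>1: "E\<^sub>1 \<in> sets borel" "emeasure lborel E\<^sub>1 \<le> ennreal (c / h + s)"
    and cover\<^sub>1: "AE y in lborel. AE x in lborel. lam + rearr \<phi>\<^sub>1 s * h powr \<alpha> < \<bar>F (x, y)\<bar> \<longrightarrow> y \<in> E\<^sub>1"
    by (rule superlevel_sections_in_small_set[of "\<lambda>x y. F (x, y)", OF _ \<alpha> \<Phi>\<^sub>1 pos int\<^sub>1]) simp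
  obtain E\<^sub>2 where E\<^sub>2: "E\<^sub>2 \<in> sets borel" "emeasure lborel E\<^sub>2 \<le> ennreal (c / h + s)"
    and cover\<^sub>2: "AE x in lborel. AE y in lborel. lam + rearr \<phi>\<^sub>2 s * h powr \<alpha> < \<bar>F (x, y)\<bar> \<longrightarrow> x \<in> E\<^sub>2"
    by (rule superlevel_sections_in_small_set[of "\<lambda>y x. F (x, y)", OF _ \<alpha> \<Phi>\<^sub>2 pos int\<^sub>2]) measurable
  have "AE z in lebesgue. \<mu> < \<bar>F z\<bar> \<longrightarrow> snd z \<in> E\<^sub>1"
  proof (rule AE_lebesgue_pairI')
    show "AE y in lborel. AE x in lborel. \<mu> < \<bar>F (x, y)\<bar> \<longrightarrow> snd (x, y) \<in> E\<^sub>1"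
      using cover\<^sub>1 by (elim eventually_mono) (use \<mu>(1) in auto)
  qed (use E\<^sub>1(1) in measurable)
  moreover have "AE z in lebesgue. \<mu> < \<bar>F z\<bar> \<longrightarrow> fst z \<in> E\<^sub>2"
  proof (rule AE_lebesgue_pairI)
    show "AE x in lborel. AE y in lborel. \<mu> < \<bar>F (x, y)\<bar> \<longrightarrow> fst (x, y) \<in> E\<^sub>2"
      using cover\<^sub>2 by (elim eventually_mono) (use \<mu>(2) in auto)
  qed (use E\<^sub>2(1) in measurable)
  ultimately have "AE z in lebesgue. z \<in> {z. \<mu> < \<bar>F z\<bar>} \<longrightarrow> z \<in> E\<^sub>2 \<times> E\<^sub>1"
    by eventually_elim (auto simp: mem_Times_iff)
  moreover have "{z. \<mu> < \<bar>F z\<bar>} \<in> sets lebesgue"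
    using sets_borel_greater[of "\<lambda>z. \<bar>F z\<bar>"] by (simp add: borel_prod[symmetric])
  ultimately have "emeasure lebesgue {z. \<mu> < \<bar>F z\<bar>} \<le> emeasure lborel E\<^sub>2 * emeasure lborel E\<^sub>1"
    using E\<^sub>1(1) E\<^sub>2(1) by (intro emeasure_lebesgue_le_Times_AE)
  also have "\<dots> \<le> ennreal (c / h + s) * ennreal (c / h + s)"
    using E\<^sub>2(2) E\<^sub>1(2) by (rule mult_mono) simp_all
  also have "\<dots> = ennreal ((c / h + s) * (c / h + s))" using pos by (intro ennreal_mult[symmetric]) auto
  finally show ?thesis .
qed

section \<open>The class U_p\<close>

lemma U_pD:
  assumes "U_p p f"
  shows "f \<in> borel_measurable lebesgue"
    and "AE y in lborel. Lip_class (1/p) (\<lambda>x. f (x, y))"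
    and "AE x in lborel. Lip_class (1/p) (\<lambda>y. f (x, y))"
    and "S0 (\<lambda>y. lip_norm (1/p) (\<lambda>x. f (x, y)))"
    and "S0 (\<lambda>x. lip_norm (1/p) (\<lambda>y. f (x, y)))"
  using assms unfolding U_p_def Lorentz_p1_def by (auto simp: AE_completion_iff)

lemma AE_abs_section_le_borel:
  fixes f F :: "real \<Rightarrow> real \<Rightarrow> real" and \<Psi> :: "real \<Rightarrow> real"
  assumes "AE y in lborel. AE x in lborel. f x y = F x y"
    and "AE y in lborel. Lip_class \<alpha> (\<lambda>x. f x y)"
    and "AE y in lborel. lip_norm \<alpha> (\<lambda>x. f x y) = \<Psi> y"
  shows "AE y in lborel. AE x in lborel. \<bar>F x y\<bar> \<le> \<Psi> y"
  using assms
proof eventually_elim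
  case (elim y)
  have "AE x in lborel. \<bar>f x y\<bar> \<le> lip_norm \<alpha> (\<lambda>x. f x y)"
    using elim(2) by (intro AE_abs_le_lip_norm) (simp add: Lip_class_def)
  with elim(1) show ?case by eventually_elim (use elim(3) in simp)
qed

lemma S0_of_section_bounds:
  fixes G :: "real \<times> real \<Rightarrow> real" and \<Psi>\<^sub>1 \<Psi>\<^sub>2 :: "real \<Rightarrow> real"
  assumes [measurable]: "G \<in> borel_measurable (borel \<Otimes>\<^sub>M borel)"
      "\<Psi>\<^sub>1 \<in> borel_measurable borel" "\<Psi>\<^sub>2 \<in> borel_measurable borel"
    and S: "S0 \<Psi>\<^sub>1" "S0 \<Psi>\<^sub>2"
    and bound\<^sub>1: "AE y in lborel. AE x in lborel. \<bar>G (x, y)\<bar> \<le> \<Psi>\<^sub>1 y"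
    and bound\<^sub>2: "AE x in lborel. AE y in lborel. \<bar>G (x, y)\<bar> \<le> \<Psi>\<^sub>2 x"
  shows "S0 G"
proof -
  have G: "G \<in> borel_measurable lebesgue" by (rule borel_measurable_lebesgue_pair) fact
  have fin: "emeasure lborel {x. s < \<Psi> x} < \<infinity>"
    if "S0 \<Psi>" "\<Psi> \<in> borel_measurable borel" "s > 0" for s and \<Psi> :: "real \<Rightarrow> real"
  proof -
    have "emeasure lborel {x. s < \<Psi> x} \<le> emeasure lebesgue {x. s < \<bar>\<Psi> x\<bar>}"
      using that by (intro emeasure_borel_superlevel_le) (auto intro: measurable_completion)
    also have "\<dots> < \<infinity>" using that unfolding S0_def by blast
    finally show ?thesis .
  qed
  have "AE z in lebesgue. \<bar>G z\<bar> \<le> \<Psi>\<^sub>1 (snd z)"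
  proof (rule AE_lebesgue_pairI')
    show "AE y in lborel. AE x in lborel. \<bar>G (x, y)\<bar> \<le> \<Psi>\<^sub>1 (snd (x, y))" using bound\<^sub>1 by simp
  qed measurable
  moreover have "AE z in lebesgue. \<bar>G z\<bar> \<le> \<Psi>\<^sub>2 (fst z)"
  proof (rule AE_lebesgue_pairI)
    show "AE x in lborel. AE y in lborel. \<bar>G (x, y)\<bar> \<le> \<Psi>\<^sub>2 (fst (x, y))" using bound\<^sub>2 by simp
  qed measurable
  ultimately have cover: "AE z in lebesgue. z \<in> {z. s < \<bar>G z\<bar>} \<longrightarrow> z \<in> {x. s < \<Psi>\<^sub>2 x} \<times> {y. s < \<Psi>\<^sub>1 y}"
    for s by (elim eventually_elim2) (auto simp: mem_Times_iff)
  have "emeasure lebesgue {z. s < \<bar>G z\<bar>} < \<infinity>" if "s > 0" for s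
  proof -
    have "emeasure lebesgue {z. s < \<bar>G z\<bar>} \<le> emeasure lborel {x. s < \<Psi>\<^sub>2 x} * emeasure lborel {y. s < \<Psi>\<^sub>1 y}"
    proof (rule emeasure_lebesgue_le_Times_AE[OF _ _ _ cover])
      show "{z. s < \<bar>G z\<bar>} \<in> sets lebesgue" using G by (rule sets_lebesgue_abs_greater)
    qed (rule sets_borel_greater, fact)+
    also have "\<dots> < \<infinity>"
      using fin[OF S(1) _ that] fin[OF S(2) _ that] unfolding ennreal_mult_less_top infinity_ennreal_def
      by simp
    finally show ?thesis .
  qed
  then show ?thesis using G unfolding S0_def by blast
qed

lemma U_p_imp_S0:
  assumes "U_p p f"
  shows "S0 f"
proof -
  note U = U_pD[OF assms]
  obtain F where [measurable]: "F \<in> borel_measurable (borel \<Otimes>\<^sub>M borel)" and fF: "AE z in lebesgue. f z = F z"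
    using obtain_borel_pair_AE_eq[OF U(1)] .
  obtain \<Psi>\<^sub>1 where [measurable]: "\<Psi>\<^sub>1 \<in> borel_measurable borel"
    and \<Psi>\<^sub>1: "AE y in lborel. lip_norm (1/p) (\<lambda>x. f (x, y)) = \<Psi>\<^sub>1 y"
    using obtain_borel_AE_eq U(4) unfolding S0_def by blast
  obtain \<Psi>\<^sub>2 where [measurable]: "\<Psi>\<^sub>2 \<in> borel_measurable borel"
    and \<Psi>\<^sub>2: "AE x in lborel. lip_norm (1/p) (\<lambda>y. f (x, y)) = \<Psi>\<^sub>2 x"
    using obtain_borel_AE_eq U(5) unfolding S0_def by blast
  have "S0 \<Psi>\<^sub>1" by (rule S0_AE_cong[OF U(4)]) (use \<Psi>\<^sub>1 in \<open>simp add: AE_completion_iff\<close>)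
  moreover have "S0 \<Psi>\<^sub>2" by (rule S0_AE_cong[OF U(5)]) (use \<Psi>\<^sub>2 in \<open>simp add: AE_completion_iff\<close>)
  moreover have "AE y in lborel. AE x in lborel. \<bar>F (x, y)\<bar> \<le> \<Psi>\<^sub>1 y"
    using AE_lebesgue_pair_sections(1)[OF fF] U(2) \<Psi>\<^sub>1 by (rule AE_abs_section_le_borel)
  moreover have "AE x in lborel. AE y in lborel. \<bar>F (x, y)\<bar> \<le> \<Psi>\<^sub>2 x"
    using AE_lebesgue_pair_sections(2)[OF fF] U(3) \<Psi>\<^sub>2 by (rule AE_abs_section_le_borel)
  ultimately have "S0 F" by (intro S0_of_section_bounds) simp_all
  then show ?thesis by (rule S0_AE_cong) (use fF in \<open>auto elim: eventually_mono\<close>)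
qed

lemma obtain_borel_U_p:
  fixes f :: "real \<times> real \<Rightarrow> real"
  assumes U: "U_p p f" and \<alpha>: "0 < 1 / p"
  obtains F \<Phi>\<^sub>1 \<Phi>\<^sub>2 where "F \<in> borel_measurable (borel \<Otimes>\<^sub>M borel)" "AE z in lebesgue. f z = F z"
    "\<Phi>\<^sub>1 \<in> borel_measurable borel" "AE y in lborel. lip_semi (1/p) (\<lambda>x. F (x, y)) = ereal (\<Phi>\<^sub>1 y)"
    "AE y in lborel. real_of_ereal (lip_semi (1/p) (\<lambda>x. f (x, y))) = \<Phi>\<^sub>1 y"
    "S0 (\<lambda>y. real_of_ereal (lip_semi (1/p) (\<lambda>x. f (x, y))))"
    "\<Phi>\<^sub>2 \<in> borel_measurable borel" "AE x in lborel. lip_semi (1/p) (\<lambda>y. F (x, y)) = ereal (\<Phi>\<^sub>2 x)"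
    "AE x in lborel. real_of_ereal (lip_semi (1/p) (\<lambda>y. f (x, y))) = \<Phi>\<^sub>2 x"
    "S0 (\<lambda>x. real_of_ereal (lip_semi (1/p) (\<lambda>y. f (x, y))))"
proof -
  note U = U_pD[OF U]
  obtain F where F[measurable]: "F \<in> borel_measurable (borel \<Otimes>\<^sub>M borel)" and fF: "AE z in lebesgue. f z = F z"
    using obtain_borel_pair_AE_eq[OF U(1)] .
  obtain \<Phi>\<^sub>1 where \<Phi>\<^sub>1: "\<Phi>\<^sub>1 \<in> borel_measurable borel" "AE y in lborel. lip_semi (1/p) (\<lambda>x. F (x, y)) = ereal (\<Phi>\<^sub>1 y)"
    "AE y in lborel. real_of_ereal (lip_semi (1/p) (\<lambda>x. f (x, y))) = \<Phi>\<^sub>1 y"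
    "S0 (\<lambda>y. real_of_ereal (lip_semi (1/p) (\<lambda>x. f (x, y))))"
    by (rule obtain_borel_lip_semi_section[of "\<lambda>x y. F (x, y)" "1/p" "\<lambda>x y. f (x, y)",
      OF _ \<alpha> AE_lebesgue_pair_sections(1)[OF fF] U(2,4)]) simp
  obtain \<Phi>\<^sub>2 where \<Phi>\<^sub>2: "\<Phi>\<^sub>2 \<in> borel_measurable borel"
    "AE x in lborel. lip_semi (1/p) (\<lambda>y. F (x, y)) = ereal (\<Phi>\<^sub>2 x)"
    "AE x in lborel. real_of_ereal (lip_semi (1/p) (\<lambda>y. f (x, y))) = \<Phi>\<^sub>2 x"
    "S0 (\<lambda>x. real_of_ereal (lip_semi (1/p) (\<lambda>y. f (x, y))))"
    by (rule obtain_borel_lip_semi_section[of "\<lambda>y x. F (x, y)" "1/p" "\<lambda>y x. f (x, y)",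
      OF _ \<alpha> AE_lebesgue_pair_sections(2)[OF fF] U(3,5)]) measurable
  show ?thesis by (rule that[OF F fF \<Phi>\<^sub>1 \<Phi>\<^sub>2])
qed

lemma powr_8_sqrt_le:
  fixes t p :: real
  assumes "t > 0" "1 \<le> p"
  shows "(8 * sqrt t) powr (1 / p) \<le> 8 * t powr (1 / (2 * p))"
proof -
  have "(8 * sqrt t) powr (1 / p) = 8 powr (1 / p) * t powr (1 / (2 * p))"
    using assms by (simp add: powr_mult powr_half_sqrt[symmetric] powr_powr)
  also have "8 powr (1 / p) \<le> 8 powr (1::real)" using assms by (intro powr_mono) auto
  then have "8 powr (1 / p) * t powr (1 / (2 * p)) \<le> 8 * t powr (1 / (2 * p))"
    by (intro mult_right_mono) auto
  finally show ?thesis .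
qed

lemma rearr_diff_le:
  fixes f :: "real \<times> real \<Rightarrow> real" and p t :: real
  defines "\<phi>\<^sub>1 \<equiv> \<lambda>y. real_of_ereal (lip_semi (1/p) (\<lambda>x. f (x, y)))"
    and "\<phi>\<^sub>2 \<equiv> \<lambda>x. real_of_ereal (lip_semi (1/p) (\<lambda>y. f (x, y)))"
  assumes p: "1 \<le> p" and U: "U_p p f" and t: "0 < t"
  shows "rearr f t - rearr f (2 * t) \<le>
    8 * t powr (1 / (2 * p)) * (rearr \<phi>\<^sub>1 (sqrt t / 2) + rearr \<phi>\<^sub>2 (sqrt t / 2))"
proof -
  have Sf: "S0 f" using U by (rule U_p_imp_S0)
  have f: "f \<in> borel_measurable lebesgue" using U by (rule U_pD)
  have \<alpha>: "0 < 1 / p" using p by simp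
  obtain F \<Phi>\<^sub>1 \<Phi>\<^sub>2 where [measurable]: "F \<in> borel_measurable (borel \<Otimes>\<^sub>M borel)"
    and fF: "AE z in lebesgue. f z = F z"
    and \<Phi>\<^sub>1: "\<Phi>\<^sub>1 \<in> borel_measurable borel" "AE y in lborel. lip_semi (1/p) (\<lambda>x. F (x, y)) = ereal (\<Phi>\<^sub>1 y)"
      "AE y in lborel. \<phi>\<^sub>1 y = \<Phi>\<^sub>1 y" "S0 \<phi>\<^sub>1"
    and \<Phi>\<^sub>2: "\<Phi>\<^sub>2 \<in> borel_measurable borel" "AE x in lborel. lip_semi (1/p) (\<lambda>y. F (x, y)) = ereal (\<Phi>\<^sub>2 x)"
      "AE x in lborel. \<phi>\<^sub>2 x = \<Phi>\<^sub>2 x" "S0 \<phi>\<^sub>2"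
    unfolding \<phi>\<^sub>1_def \<phi>\<^sub>2_def using U \<alpha> by (rule obtain_borel_U_p)
  have F: "F \<in> borel_measurable lebesgue" by (rule borel_measurable_lebesgue_pair) fact
  define s h C where "s = sqrt t / 2" and "h = 8 * sqrt t" and "C = 8 * t powr (1 / (2 * p))"
  define \<mu> where "\<mu> = rearr f (2 * t) + C * (rearr \<phi>\<^sub>1 s + rearr \<phi>\<^sub>2 s)"
  have pos: "s > 0" "h > 0" "2 * t \<ge> 0" unfolding s_def h_def using t by auto
  have ab: "0 \<le> rearr \<phi>\<^sub>1 s" "0 \<le> rearr \<phi>\<^sub>2 s"
    using rearr_nonneg[OF \<Phi>\<^sub>1(4) pos(1)] rearr_nonneg[OF \<Phi>\<^sub>2(4) pos(1)] .
  have C: "h powr (1/p) \<le> C" "0 \<le> C" unfolding h_def C_def using powr_8_sqrt_le[OF t p] by simp_all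
  have \<mu>: "rearr f (2 * t) + rearr \<phi>\<^sub>1 s * h powr (1/p) \<le> \<mu>"
    "rearr f (2 * t) + rearr \<phi>\<^sub>2 s * h powr (1/p) \<le> \<mu>"
    unfolding \<mu>_def distrib_left mult.commute[of C]
    using mult_left_mono[OF C(1) ab(1)] mult_left_mono[OF C(1) ab(2)]
      mult_nonneg_nonneg[OF ab(1) C(2)] mult_nonneg_nonneg[OF ab(2) C(2)] by linarith+
  have "emeasure lebesgue {z. rearr f (2 * t) < \<bar>F z\<bar>} \<le> ennreal (2 * t)"
    using emeasure_rearr_level_le[OF Sf, of "2 * t"] emeasure_superlevel_AE_cong[OF f F fF] t by simp
  from superlevel_set_in_small_rectangle[OF _ \<alpha> \<Phi>\<^sub>1 \<Phi>\<^sub>2 pos this \<mu>]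
  have "emeasure lebesgue {z. \<mu> < \<bar>F z\<bar>} \<le> ennreal ((2 * t / h + s) * (2 * t / h + s))" by simp
  also have "(2 * t / h + s) * (2 * t / h + s) = 9 / 16 * t"
  proof -
    have "2 * t / h = sqrt t / 4" unfolding h_def using t by (simp add: field_simps)
    then have u: "2 * t / h + s = 3 / 4 * sqrt t" unfolding s_def by simp
    show ?thesis unfolding u using t by simp
  qed
  also have "\<dots> \<le> ennreal t" using t by simp
  finally have "emeasure lebesgue {z. \<mu> < \<bar>f z\<bar>} \<le> ennreal t"
    using emeasure_superlevel_AE_cong[OF f F fF] by simp
  moreover have "0 \<le> \<mu>" unfolding \<mu>_def using rearr_nonneg[OF Sf] t ab C(2) by simp
  ultimately have "rearr f t \<le> \<mu>" by (intro rearr_le)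
  then show ?thesis unfolding \<mu>_def C_def s_def by simp
qed

theorem mainTheorem5:
  fixes p :: real
  assumes "1 \<le> p"
  shows "(\<forall>f. U_p p f \<longrightarrow> S0 f) \<and>
    (\<exists>c>0. \<forall>f. U_p p f \<longrightarrow>
       (\<forall>t>0. rearr f t - rearr f (2 * t) \<le>
          c * t powr (1 / (2 * p)) *
            (rearr (\<lambda>y. real_of_ereal (lip_semi (1/p) (\<lambda>x. f (x, y)))) (sqrt t / 2)
           + rearr (\<lambda>x. real_of_ereal (lip_semi (1/p) (\<lambda>y. f (x, y)))) (sqrt t / 2))))"
proof (intro conjI allI impI exI[of _ "8::real"])
  fix f :: "real \<times> real \<Rightarrow> real" and t :: real
  assume "U_p p f"
  then show "S0 f" by (rule U_p_imp_S0)
  assume "0 < t"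
  with \<open>U_p p f\<close> show "rearr f t - rearr f (2 * t) \<le>
    8 * t powr (1 / (2 * p)) *
      (rearr (\<lambda>y. real_of_ereal (lip_semi (1/p) (\<lambda>x. f (x, y)))) (sqrt t / 2)
     + rearr (\<lambda>x. real_of_ereal (lip_semi (1/p) (\<lambda>y. f (x, y)))) (sqrt t / 2))"
    by (rule rearr_diff_le[OF assms])
qed simp

end
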